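(* Let $S\subset\mathbb{R}^d$ be a nonempty compact convex set with diameter $D:=\sup_{x,y\in S}\|x-y\|$, and let $f$ be differentiable on $S$ with $L$-Lipschitz gradient on $S$. Let $G:=\sup_{x\in S}\|\nabla f(x)\|<\infty$ and fix $C\ge\max\{LD^2,\,GD\}$ with $C>0$. Let $\delta\ge0$ and suppose that for every $x\in S$ a vector $g_\delta(x)\in\mathbb{R}^d$ is available with \[ \big|\langle \nabla f(x)-g_\delta(x),\,s-x\rangle\big|\le\delta\,\|\nabla f(x)\|\quad\text{for all } s\in S. \] Let $\tilde{\mathcal G}(x):=\max_{s\in S}\langle g_\delta(x),\,x-s\rangle$. Given $x^0\in S$, define iterates for $k=0,1,2,\dots$ by choosing $s^k\in\arg\min_{s\in S}\langle g_\delta(x^k),\,s-x^k\rangle$, setting \[ \overline\alpha_k:=\frac{\big(\tilde{\mathcal G}(x^k)-\delta\|\nabla f(x^k)\|\big)_+}{C},\qquad x^{k+1}:=x^k+\overline\alpha_k(s^k-x^k), \] where $(u)_+:=\max\{u,0\}$. Then for every $k\ge0$, \[ f(x^{k+1})\le f(x^k)-\frac{\big(\tilde{\mathcal G}(x^k)-\delta\|\nabla f(x^k)\|\big)_+^2}{2C}. \]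
   Context: $\|\cdot\|$ is the Euclidean norm and $\langle\cdot,\cdot\rangle$ the Euclidean inner product. $f$ need not be convex. *)

theory Defs
  imports "HOL-Analysis.Analysis"
begin

definition fw_gap_tilde :: "('a::euclidean_space \<Rightarrow> 'a) \<Rightarrow> 'a set \<Rightarrow> 'a \<Rightarrow> real" where
  "fw_gap_tilde g S x = (SUP s\<in>S. g x \<bullet> (x - s))"

definition pos_part :: "real \<Rightarrow> real" where
  "pos_part u = max u 0"

end

theory Submission
  imports Defs
begin

text \<open>
  An \<open>L\<close>-Lipschitz gradient on the convex set \<open>S\<close> gives the quadratic upper bound
  \<open>f y \<le> f x + \<langle>\<nabla>f x, y - x\<rangle> + L/2 \<parallel>y - x\<parallel>\<^sup>2\<close>. Let \<open>P\<close> be the positive part of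
  \<open>\<G>(x\<^sup>k) - \<delta> \<parallel>\<nabla>f(x\<^sup>k)\<parallel>\<close>, where \<open>\<G>\<close> is the perturbed gap. As \<open>s\<^sup>k\<close> minimises the
  inexact linear model, the error bound on \<open>g\<close> gives \<open>P \<le> \<langle>\<nabla>f(x\<^sup>k), x\<^sup>k - s\<^sup>k\<rangle>\<close> whenever
  \<open>P > 0\<close>, and this exact gap is at most \<open>G D \<le> C\<close>; so the step \<open>P/C\<close> lies in \<open>[0, 1]\<close> and
  the iterates stay in \<open>S\<close>. Since also \<open>L \<parallel>s\<^sup>k - x\<^sup>k\<parallel>\<^sup>2 \<le> L D\<^sup>2 \<le> C\<close>, the quadratic bound
  at this step yields a decrease of at least \<open>P\<^sup>2/C - P\<^sup>2/(2C) = P\<^sup>2/(2C)\<close>.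
\<close>

lemma convex_step_mem:
  assumes "convex S" "x \<in> S" "y \<in> S" "0 \<le> t" "t \<le> 1"
  shows "x + t *\<^sub>R (y - x) \<in> S"
  using convexD_alt[OF assms] by (simp add: algebra_simps)

lemma lipschitz_gradient_quadratic_upper_bound:
  fixes S :: "'a::real_inner set" and f :: "'a \<Rightarrow> real" and grad :: "'a \<Rightarrow> 'a"
  assumes "convex S" and xS: "x \<in> S" and yS: "y \<in> S"
    and f_diff: "\<And>z. z \<in> S \<Longrightarrow> (f has_derivative (\<lambda>h. grad z \<bullet> h)) (at z within S)"
    and grad_lip: "\<And>z w. z \<in> S \<Longrightarrow> w \<in> S \<Longrightarrow> norm (grad z - grad w) \<le> L * norm (z - w)"
  shows "f y \<le> f x + grad x \<bullet> (y - x) + L / 2 * (norm (y - x))\<^sup>2"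
proof -
  define d where "d = y - x"
  define p where "p t = x + t *\<^sub>R d" for t :: real
  have pS: "p t \<in> S" if "t \<in> {0..1}" for t
    using convex_step_mem[OF \<open>convex S\<close> xS yS] that by (simp add: p_def d_def)
  define \<psi> where "\<psi> t = f (p t) - f x - t * (grad x \<bullet> d) - L / 2 * t\<^sup>2 * (norm d)\<^sup>2" for t
  define \<psi>' where "\<psi>' t h = h * (grad (p t) \<bullet> d) - h * (grad x \<bullet> d) - h * (L * t * (norm d)\<^sup>2)" for t h
  have \<psi>_deriv: "(\<psi> has_derivative \<psi>' t) (at t within {0..1})" if "t \<in> {0..1}" for t
  proof -
    have p_deriv: "(p has_derivative (\<lambda>h. h *\<^sub>R d)) (at t within {0..1})"
      unfolding p_def by (auto intro!: derivative_eq_intros)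
    have f_p_deriv:
      "((\<lambda>t. f (p t)) has_derivative (\<lambda>h. grad (p t) \<bullet> (h *\<^sub>R d))) (at t within {0..1})"
      by (rule has_derivative_in_compose2[OF f_diff _ _ p_deriv]) (use pS that in auto)
    show ?thesis unfolding \<psi>_def \<psi>'_def
      by (rule derivative_eq_intros f_p_deriv | simp)+ (auto simp: algebra_simps power2_eq_square)
  qed
  obtain t where t: "t \<in> {0<..<1}" "\<psi> 1 - \<psi> 0 = \<psi>' t 1"
    using mvt_simple[of 0 1 \<psi> \<psi>'] \<psi>_deriv by auto
  have "(grad (p t) - grad x) \<bullet> d \<le> norm (grad (p t) - grad x) * norm d"
    by (rule norm_cauchy_schwarz)
  also have "\<dots> \<le> L * norm (p t - x) * norm d"
    using grad_lip[OF pS xS] t(1) by (intro mult_right_mono) auto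
  also have "\<dots> = L * t * (norm d)\<^sup>2"
    using t(1) by (simp add: p_def power2_eq_square)
  finally have "\<psi>' t 1 \<le> 0" unfolding \<psi>'_def by (simp add: inner_diff_left)
  moreover have "\<psi> 0 = 0" unfolding \<psi>_def p_def by simp
  ultimately have "\<psi> 1 \<le> 0" using t(2) by simp
  then show ?thesis unfolding \<psi>_def p_def d_def by simp
qed

lemma fw_gap_tilde_argmin:
  assumes "s \<in> S" and "\<And>z. z \<in> S \<Longrightarrow> g x \<bullet> (s - x) \<le> g x \<bullet> (z - x)"
  shows "fw_gap_tilde g S x = g x \<bullet> (x - s)"
  unfolding fw_gap_tilde_def
proof (rule cSup_eq_maximum)
  show "g x \<bullet> (x - s) \<in> (\<lambda>z. g x \<bullet> (x - z)) ` S" using assms(1) by auto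
  show "y \<le> g x \<bullet> (x - s)" if "y \<in> (\<lambda>z. g x \<bullet> (x - z)) ` S" for y
    using that assms(2) by (auto simp: inner_diff_right)
qed

lemma inner_le_SUP_norm_mult_diameter:
  fixes grad :: "'a::real_inner \<Rightarrow> 'a"
  assumes "bounded S" "bdd_above ((\<lambda>y. norm (grad y)) ` S)" "x \<in> S" "s \<in> S"
  shows "grad x \<bullet> (x - s) \<le> (SUP y\<in>S. norm (grad y)) * diameter S"
proof -
  have "grad x \<bullet> (x - s) \<le> norm (grad x) * norm (x - s)"
    by (rule norm_cauchy_schwarz)
  also have "\<dots> \<le> (SUP y\<in>S. norm (grad y)) * diameter S"
    using cSUP_upper[OF assms(3,2)] diameter_bounded_bound[OF assms(1,3,4)]
    by (intro mult_mono) (auto simp: dist_norm intro: order_trans[OF norm_ge_zero])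
  finally show ?thesis .
qed

lemma mult_norm_square_le_diameter:
  fixes S :: "'a::real_normed_vector set" and L :: real
  assumes "bounded S" "x \<in> S" "s \<in> S"
  shows "L * (norm (s - x))\<^sup>2 \<le> max 0 (L * (diameter S)\<^sup>2)"
proof (cases "L \<ge> 0")
  case True
  have "norm (s - x) \<le> diameter S"
    using diameter_bounded_bound[OF assms] by (simp add: dist_norm norm_minus_commute)
  then show ?thesis using True by (simp add: le_max_iff_disj mult_left_mono power_mono)
next
  case False
  then show ?thesis by (simp add: le_max_iff_disj mult_nonpos_nonneg)
qed

lemma pos_part_le: "u \<le> c \<Longrightarrow> 0 \<le> c \<Longrightarrow> pos_part u \<le> c"
  by (simp add: pos_part_def)

lemma short_step_model_bound:
  fixes u b q C :: real
  assumes "C > 0" "u \<le> b" "q \<le> C"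
  shows "pos_part u / C * (- b) + (pos_part u / C)\<^sup>2 / 2 * q \<le> - (pos_part u)\<^sup>2 / (2 * C)"
proof -
  define P where "P = pos_part u"
  have "P\<^sup>2 \<le> P * b"
    using assms(2) by (cases "u \<le> 0") (auto simp: P_def pos_part_def power2_eq_square)
  moreover have "P\<^sup>2 * q \<le> P\<^sup>2 * C"
    using assms(3) by (simp add: mult_left_mono)
  ultimately have "- P * b / C + P\<^sup>2 * q / (2 * C\<^sup>2) \<le> - P\<^sup>2 / C + P\<^sup>2 * C / (2 * C\<^sup>2)"
    using assms(1) by (intro add_mono divide_right_mono) auto
  also have "\<dots> = - P\<^sup>2 / (2 * C)"
    using assms(1) by (simp add: field_simps power2_eq_square)
  finally show ?thesis
    unfolding P_def[symmetric] by (simp add: power_divide)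
qed

lemma frank_wolfe_short_step_mem:
  fixes grad :: "'a::real_inner \<Rightarrow> 'a"
  assumes "convex S" "x \<in> S" "s \<in> S"
    and "u \<le> grad x \<bullet> (x - s)" "grad x \<bullet> (x - s) \<le> C" "C > 0"
  shows "x + (pos_part u / C) *\<^sub>R (s - x) \<in> S"
proof (rule convex_step_mem[OF assms(1-3)])
  show "0 \<le> pos_part u / C" using assms(6) by (simp add: pos_part_def)
  show "pos_part u / C \<le> 1"
    using pos_part_le[of u C] assms(4-6) by simp
qed

lemma frank_wolfe_short_step_decrease:
  fixes S :: "'a::real_inner set" and f :: "'a \<Rightarrow> real" and grad :: "'a \<Rightarrow> 'a"
  assumes "convex S" and xS: "x \<in> S" and sS: "s \<in> S"
    and f_diff: "\<And>z. z \<in> S \<Longrightarrow> (f has_derivative (\<lambda>h. grad z \<bullet> h)) (at z within S)"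
    and grad_lip: "\<And>z w. z \<in> S \<Longrightarrow> w \<in> S \<Longrightarrow> norm (grad z - grad w) \<le> L * norm (z - w)"
    and gap: "u \<le> grad x \<bullet> (x - s)" "grad x \<bullet> (x - s) \<le> C"
    and curv: "L * (norm (s - x))\<^sup>2 \<le> C" and "C > 0"
  shows "f (x + (pos_part u / C) *\<^sub>R (s - x)) \<le> f x - (pos_part u)\<^sup>2 / (2 * C)"
proof -
  define a where "a = pos_part u / C"
  have "x + a *\<^sub>R (s - x) \<in> S"
    unfolding a_def
    by (rule frank_wolfe_short_step_mem[where grad = grad, OF \<open>convex S\<close> xS sS gap \<open>C > 0\<close>])
  then have "f (x + a *\<^sub>R (s - x))
      \<le> f x + grad x \<bullet> (x + a *\<^sub>R (s - x) - x) + L / 2 * (norm (x + a *\<^sub>R (s - x) - x))\<^sup>2"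
    by (rule lipschitz_gradient_quadratic_upper_bound[OF \<open>convex S\<close> xS _ f_diff grad_lip])
  also have "\<dots> = f x + (a * (- (grad x \<bullet> (x - s))) + a\<^sup>2 / 2 * (L * (norm (s - x))\<^sup>2))"
    by (simp add: inner_diff_right power_mult_distrib)
  also have "\<dots> \<le> f x - (pos_part u)\<^sup>2 / (2 * C)"
    using short_step_model_bound[OF \<open>C > 0\<close> gap(1) curv] by (simp add: a_def)
  finally show ?thesis by (simp add: a_def)
qed

theorem lemma3:
  fixes S :: "'a::euclidean_space set"
    and f :: "'a \<Rightarrow> real"
    and grad g :: "'a \<Rightarrow> 'a"
    and L C \<delta> :: real
    and x s :: "nat \<Rightarrow> 'a"
  assumes S_nonempty: "S \<noteq> {}"
    and S_compact: "compact S"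
    and S_convex: "convex S"
    and f_diff: "\<And>y. y \<in> S \<Longrightarrow> (f has_derivative (\<lambda>h. grad y \<bullet> h)) (at y within S)"
    and grad_lip: "\<And>y z. y \<in> S \<Longrightarrow> z \<in> S \<Longrightarrow> norm (grad y - grad z) \<le> L * norm (y - z)"
    and G_finite: "bdd_above ((\<lambda>y. norm (grad y)) ` S)"
    and C_ge: "C \<ge> max (L * (diameter S)\<^sup>2) ((SUP y\<in>S. norm (grad y)) * diameter S)"
    and C_pos: "C > 0"
    and delta_nonneg: "\<delta> \<ge> 0"
    and g_approx: "\<And>y z. y \<in> S \<Longrightarrow> z \<in> S \<Longrightarrow>
                     \<bar>(grad y - g y) \<bullet> (z - y)\<bar> \<le> \<delta> * norm (grad y)"
    and x0: "x 0 \<in> S"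
    and s_in: "\<And>k. s k \<in> S"
    and s_argmin: "\<And>k z. z \<in> S \<Longrightarrow> g (x k) \<bullet> (s k - x k) \<le> g (x k) \<bullet> (z - x k)"
    and x_step: "\<And>k. x (Suc k) = x k + (pos_part (fw_gap_tilde g S (x k) - \<delta> * norm (grad (x k))) / C) *\<^sub>R (s k - x k)"
  shows "\<forall>k. f (x (Suc k)) \<le> f (x k) - (pos_part (fw_gap_tilde g S (x k) - \<delta> * norm (grad (x k))))\<^sup>2 / (2 * C)"
proof -
  define u where "u k = fw_gap_tilde g S (x k) - \<delta> * norm (grad (x k))" for k
  have "bounded S" using S_compact by (rule compact_imp_bounded)
  have gap: "u k \<le> grad (x k) \<bullet> (x k - s k)" "grad (x k) \<bullet> (x k - s k) \<le> C"
    and curv: "L * (norm (s k - x k))\<^sup>2 \<le> C" if "x k \<in> S" for k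
  proof -
    have "(grad (x k) - g (x k)) \<bullet> (s k - x k) \<le> \<delta> * norm (grad (x k))"
      using g_approx[OF that s_in[of k]] by linarith
    then show "u k \<le> grad (x k) \<bullet> (x k - s k)"
      using fw_gap_tilde_argmin[where g = g and x = "x k", OF s_in s_argmin]
      by (simp add: u_def inner_diff_left inner_diff_right)
    show "grad (x k) \<bullet> (x k - s k) \<le> C"
      using inner_le_SUP_norm_mult_diameter[OF \<open>bounded S\<close> G_finite that s_in[of k]] C_ge by simp
    show "L * (norm (s k - x k))\<^sup>2 \<le> C"
      using mult_norm_square_le_diameter[OF \<open>bounded S\<close> that s_in[of k], of L] C_ge C_pos
      by (simp add: max_def split: if_splits)
  qed
  have x_step': "x (Suc k) = x k + (pos_part (u k) / C) *\<^sub>R (s k - x k)" for k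
    unfolding u_def by (rule x_step)
  have xS: "x k \<in> S" for k
  proof (induction k)
    case (Suc k)
    show ?case
      unfolding x_step'
      by (rule frank_wolfe_short_step_mem[where grad = grad, OF S_convex Suc s_in gap[OF Suc] C_pos])
  qed (rule x0)
  have "f (x (Suc k)) \<le> f (x k) - (pos_part (u k))\<^sup>2 / (2 * C)" for k
    unfolding x_step'
    by (rule frank_wolfe_short_step_decrease[where grad = grad,
          OF S_convex xS s_in f_diff grad_lip gap[OF xS] curv[OF xS] C_pos])
  then show ?thesis by (simp add: u_def)
qed

end
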